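(* Let $M$ be a finite set, let $\mathcal{X}\subseteq\mathcal{P}(M)$ be a closure system on $M$, and let $\mathcal{M}=\{N_i\mid i\in I\}\subseteq\mathcal{P}(M)$ be a consortial domain on $M$. If $\mathcal{M}$ is closed under (pairwise) intersection, then the set $\bigcup_{N\in\mathcal{M}}\mathcal{X}_N$ is closed under (pairwise) intersection.
   Context: A closure system on $M$ is a family of subsets of $M$ containing $M$ and closed under intersections. A consortial domain on $M$ is a family $\mathcal{M}=\{N_i\mid i\in I\}\subseteq\mathcal{P}(M)$ with $\bigcup_{i\in I}N_i=M$. For $N\subseteq M$, $\mathcal{X}_N:=\{X\cap N\mid X\in\mathcal{X}\}$. *)

theory Defs
  imports Main
begin

definition closure_system :: "'a set \<Rightarrow> 'a set set \<Rightarrow> bool" where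
  "closure_system M X \<longleftrightarrow> X \<subseteq> Pow M \<and> M \<in> X \<and> (\<forall>S. S \<subseteq> X \<longrightarrow> \<Inter>S \<inter> M \<in> X)"

definition consortial_domain :: "'a set \<Rightarrow> 'a set set \<Rightarrow> bool" where
  "consortial_domain M \<M> \<longleftrightarrow> \<M> \<subseteq> Pow M \<and> \<Union>\<M> = M"

definition restr :: "'a set set \<Rightarrow> 'a set \<Rightarrow> 'a set set" where
  "restr X N = {Y \<inter> N | Y. Y \<in> X}"

end

theory Submission
  imports Defs
begin

text \<open>An intersection of traces \<open>(Y\<^sub>1 \<inter> N\<^sub>1) \<inter> (Y\<^sub>2 \<inter> N\<^sub>2)\<close> is the trace
  of \<open>Y\<^sub>1 \<inter> Y\<^sub>2\<close>, which lies in the closure system, on \<open>N\<^sub>1 \<inter> N\<^sub>2\<close>, which lies in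
  the domain.\<close>

lemma closure_system_Int:
  assumes "closure_system M X" and "Y1 \<in> X" and "Y2 \<in> X"
  shows "Y1 \<inter> Y2 \<in> X"
proof -
  have sub: "X \<subseteq> Pow M" and Inter_closed: "\<And>S. S \<subseteq> X \<Longrightarrow> \<Inter>S \<inter> M \<in> X"
    using assms(1) unfolding closure_system_def by auto
  have "\<Inter>{Y1, Y2} \<inter> M \<in> X"
    using Inter_closed[of "{Y1, Y2}"] assms(2,3) by blast
  moreover have "\<Inter>{Y1, Y2} \<inter> M = Y1 \<inter> Y2"
    using sub assms(2) by auto
  ultimately show ?thesis by simp
qed

lemma restr_Int:
  assumes "\<And>Y1 Y2. Y1 \<in> X \<Longrightarrow> Y2 \<in> X \<Longrightarrow> Y1 \<inter> Y2 \<in> X"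
    and "A \<in> restr X N1" and "B \<in> restr X N2"
  shows "A \<inter> B \<in> restr X (N1 \<inter> N2)"
proof -
  obtain Y1 Y2 where "Y1 \<in> X" "Y2 \<in> X" "A = Y1 \<inter> N1" "B = Y2 \<inter> N2"
    using assms(2,3) unfolding restr_def by auto
  then have "A \<inter> B = (Y1 \<inter> Y2) \<inter> (N1 \<inter> N2)" and "Y1 \<inter> Y2 \<in> X"
    using assms(1) by auto
  then show ?thesis
    unfolding restr_def by blast
qed

theorem mainTheorem2:
  fixes M :: "'a set" and X :: "'a set set" and \<M> :: "'a set set"
  assumes "finite M"
    and "closure_system M X"
    and "consortial_domain M \<M>"
    and "\<forall>N1\<in>\<M>. \<forall>N2\<in>\<M>. N1 \<inter> N2 \<in> \<M>"
  shows "\<forall>A\<in>(\<Union>N\<in>\<M>. restr X N). \<forall>B\<in>(\<Union>N\<in>\<M>. restr X N). A \<inter> B \<in> (\<Union>N\<in>\<M>. restr X N)"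
proof (intro ballI)
  fix A B
  assume "A \<in> (\<Union>N\<in>\<M>. restr X N)" and "B \<in> (\<Union>N\<in>\<M>. restr X N)"
  then obtain N1 N2 where "N1 \<in> \<M>" "N2 \<in> \<M>" "A \<in> restr X N1" "B \<in> restr X N2"
    by blast
  then have "N1 \<inter> N2 \<in> \<M>" and "A \<inter> B \<in> restr X (N1 \<inter> N2)"
    using assms(4) restr_Int[OF closure_system_Int[OF assms(2)]] by blast+
  then show "A \<inter> B \<in> (\<Union>N\<in>\<M>. restr X N)"
    by blast
qed
end
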